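(* Fix $\alpha\in[0,1]$, assume $\mathcal{N}_M>1$, and let $A_p>0$. Consider the open-loop male-scarcity system on $\mathbb{R}^3_+$: $M'=r\rho Ue^{-\sigma(M+A+U)}-\alpha\frac{A_p}{A_p+A}M-\mu M$, $A'=(1-r)\rho Ue^{-\sigma(M+A+U)}-\nu\frac{\gamma M}{A_p+A}A+\eta U-\delta A$, $U'=\nu\frac{\gamma M}{A_p+A}A-\eta U-\delta U$. (a) If $0<A_p<\tilde A_p^{crit}$, then the basin of attraction of $\mathbf{E}_0=(0,0,0)$ for this system contains $\{\mathbf{X}\in\mathbb{R}^3_+:\ \mathbf{E}_0\le\mathbf{X}<\tilde{\mathbf{E}}_{1,p}\}$. (b) If $A_p>\tilde A_p^{crit}$, then $\mathbf{E}_0$ is globally asymptotically stable on $\mathbb{R}^3_+$ for this system.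
   Context: Parameters: $r\in(0,1)$, $\rho,\sigma,\mu,\delta,\nu,\eta>0$, $\gamma\ge1$; $\mathcal{N}_M:=\frac{\gamma r\rho\nu}{\mu(\delta+\eta)}$. Auxiliary system: $M'=r\rho Ue^{-\sigma M}-\alpha\frac{A_p}{A_p+A}M-\mu M$, $A'=((1-r)\rho+\eta)U-\delta A$, $U'=\nu\frac{\gamma M}{A_p+A}A-(\eta+\delta)U$. $\tilde A_p^{crit}>0$ is the threshold (independent of $A_p$) such that for $A_p>\tilde A_p^{crit}$ the auxiliary system has no positive equilibrium and $\mathbf{E}_0$ is globally asymptotically stable for it on $\mathbb{R}^3_+$, while for $0<A_p<\tilde A_p^{crit}$ the auxiliary system has exactly two positive equilibria $\tilde{\mathbf{E}}_{1,p}<\tilde{\mathbf{E}}_{2,p}$ (componentwise) and the basin of $\mathbf{E}_0$ for the auxiliary system contains $\{\mathbf{E}_0\le\mathbf{X}<\tilde{\mathbf{E}}_{1,p}\}$. Order is componentwise. *)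

theory Defs
  imports "HOL-Analysis.Analysis"
begin

type_synonym state = "real \<times> real \<times> real"   (* (M, A, U) *)

definition full_field ::
  "real \<Rightarrow> real \<Rightarrow> real \<Rightarrow> real \<Rightarrow> real \<Rightarrow> real \<Rightarrow> real \<Rightarrow> real \<Rightarrow> real \<Rightarrow> real \<Rightarrow> state \<Rightarrow> state" where
  "full_field r \<rho> \<sigma> \<mu> \<delta> \<nu> \<eta> \<gamma> \<alpha> Ap =
     (\<lambda>(M, A, U).
       ( r * \<rho> * U * exp (- \<sigma> * (M + A + U)) - \<alpha> * (Ap / (Ap + A)) * M - \<mu> * M,
         (1 - r) * \<rho> * U * exp (- \<sigma> * (M + A + U)) - \<nu> * (\<gamma> * M / (Ap + A)) * A + \<eta> * U - \<delta> * A,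
         \<nu> * (\<gamma> * M / (Ap + A)) * A - \<eta> * U - \<delta> * U))"

definition aux_field ::
  "real \<Rightarrow> real \<Rightarrow> real \<Rightarrow> real \<Rightarrow> real \<Rightarrow> real \<Rightarrow> real \<Rightarrow> real \<Rightarrow> real \<Rightarrow> real \<Rightarrow> state \<Rightarrow> state" where
  "aux_field r \<rho> \<sigma> \<mu> \<delta> \<nu> \<eta> \<gamma> \<alpha> Ap =
     (\<lambda>(M, A, U).
       ( r * \<rho> * U * exp (- \<sigma> * M) - \<alpha> * (Ap / (Ap + A)) * M - \<mu> * M,
         ((1 - r) * \<rho> + \<eta>) * U - \<delta> * A,
         \<nu> * (\<gamma> * M / (Ap + A)) * A - (\<eta> + \<delta>) * U))"

definition N_M :: "real \<Rightarrow> real \<Rightarrow> real \<Rightarrow> real \<Rightarrow> real \<Rightarrow> real \<Rightarrow> real \<Rightarrow> real" where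
  "N_M r \<rho> \<mu> \<delta> \<nu> \<eta> \<gamma> = \<gamma> * r * \<rho> * \<nu> / (\<mu> * (\<delta> + \<eta>))"

definition R3plus :: "state set" where
  "R3plus = {(M, A, U). 0 \<le> M \<and> 0 \<le> A \<and> 0 \<le> U}"

definition le3 :: "state \<Rightarrow> state \<Rightarrow> bool" where
  "le3 X Y \<longleftrightarrow> fst X \<le> fst Y \<and> fst (snd X) \<le> fst (snd Y) \<and> snd (snd X) \<le> snd (snd Y)"

definition lt3 :: "state \<Rightarrow> state \<Rightarrow> bool" where
  "lt3 X Y \<longleftrightarrow> fst X < fst Y \<and> fst (snd X) < fst (snd Y) \<and> snd (snd X) < snd (snd Y)"

definition E0 :: state where "E0 = (0, 0, 0)"

definition positive_equilibria :: "(state \<Rightarrow> state) \<Rightarrow> state set" where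
  "positive_equilibria f = {E. lt3 E0 E \<and> f E = 0}"

definition is_solution :: "(state \<Rightarrow> state) \<Rightarrow> (real \<Rightarrow> state) \<Rightarrow> bool" where
  "is_solution f x \<longleftrightarrow>
     (\<forall>t\<ge>0. (x has_vector_derivative f (x t)) (at t within {0..}) \<and> x t \<in> R3plus)"

definition in_basin :: "(state \<Rightarrow> state) \<Rightarrow> state \<Rightarrow> state \<Rightarrow> bool" where
  "in_basin f E X0 \<longleftrightarrow>
     (\<exists>x. is_solution f x \<and> x 0 = X0) \<and>
     (\<forall>x. is_solution f x \<and> x 0 = X0 \<longrightarrow> (x \<longlongrightarrow> E) at_top)"

definition basin :: "(state \<Rightarrow> state) \<Rightarrow> state \<Rightarrow> state set" where
  "basin f E = {X0 \<in> R3plus. in_basin f E X0}"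

definition lyapunov_stable :: "(state \<Rightarrow> state) \<Rightarrow> state \<Rightarrow> bool" where
  "lyapunov_stable f E \<longleftrightarrow>
     (\<forall>\<epsilon>>0. \<exists>d>0. \<forall>x. is_solution f x \<and> dist (x 0) E < d \<longrightarrow> (\<forall>t\<ge>0. dist (x t) E < \<epsilon>))"

definition GAS_on_R3plus :: "(state \<Rightarrow> state) \<Rightarrow> state \<Rightarrow> bool" where
  "GAS_on_R3plus f E \<longleftrightarrow> lyapunov_stable f E \<and> R3plus \<subseteq> basin f E"

definition lower_box :: "state \<Rightarrow> state set" where
  "lower_box E1 = {X. le3 E0 X \<and> lt3 X E1}"

definition is_aux_threshold ::
  "real \<Rightarrow> real \<Rightarrow> real \<Rightarrow> real \<Rightarrow> real \<Rightarrow> real \<Rightarrow> real \<Rightarrow> real \<Rightarrow> real \<Rightarrow> real \<Rightarrow> bool" where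
  "is_aux_threshold r \<rho> \<sigma> \<mu> \<delta> \<nu> \<eta> \<gamma> \<alpha> c \<longleftrightarrow>
     0 < c \<and>
     (\<forall>Ap. c < Ap \<longrightarrow>
        positive_equilibria (aux_field r \<rho> \<sigma> \<mu> \<delta> \<nu> \<eta> \<gamma> \<alpha> Ap) = {} \<and>
        GAS_on_R3plus (aux_field r \<rho> \<sigma> \<mu> \<delta> \<nu> \<eta> \<gamma> \<alpha> Ap) E0) \<and>
     (\<forall>Ap. 0 < Ap \<and> Ap < c \<longrightarrow>
        (\<exists>E1 E2. lt3 E1 E2 \<and>
           positive_equilibria (aux_field r \<rho> \<sigma> \<mu> \<delta> \<nu> \<eta> \<gamma> \<alpha> Ap) = {E1, E2} \<and>
           lower_box E1 \<subseteq> basin (aux_field r \<rho> \<sigma> \<mu> \<delta> \<nu> \<eta> \<gamma> \<alpha> Ap) E0))"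

end

theory Submission
  imports Defs
begin

text \<open>On the nonnegative orthant the full field \<open>F\<close> and the auxiliary field \<open>G\<close> satisfy the
  one-sided estimate \<open>(X - Y)\<^sup>+ \<bullet> (F X - G Y) \<le> c |(X - Y)\<^sup>+|\<^sup>2\<close>, with \<open>c\<close> depending on a bound
  for the males of \<open>Y\<close>: the competition factor \<open>exp (-\<sigma>(M + A + U))\<close> is dominated by
  \<open>exp (-\<sigma> M)\<close>, the mating loss of \<open>A\<close> only helps, and the saturation terms are Lipschitz.
  By Gronwall, a solution of the full system therefore stays componentwise below the solution
  of the auxiliary system with the same initial value, so attraction to \<open>E0\<close> and Lyapunov
  stability pass from the auxiliary system to the full one. Global nonnegative solutions of
  the full system are obtained by Picard iteration for the field truncated to a cube; the cube
  is forward invariant because the total population \<open>S\<close> satisfies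
  \<open>S' \<le> \<rho>/\<sigma> - min \<mu> \<delta> S\<close>.\<close>

lemma lipschitz_on_fst [lipschitz_intros]: "C-lipschitz_on S f \<Longrightarrow> C-lipschitz_on S (\<lambda>x. fst (f x))"
  and lipschitz_on_snd [lipschitz_intros]: "C-lipschitz_on S f \<Longrightarrow> C-lipschitz_on S (\<lambda>x. snd (f x))"
  by (auto simp: lipschitz_on_def intro: order_trans[OF dist_fst_le] order_trans[OF dist_snd_le])

lemma lipschitz_on_mult_bounded:
  fixes f g :: "'a::metric_space \<Rightarrow> 'b::real_normed_algebra"
  assumes f: "Lf-lipschitz_on S f" and g: "Lg-lipschitz_on S g"
    and "\<And>x. x \<in> S \<Longrightarrow> norm (f x) \<le> Bf" "\<And>x. x \<in> S \<Longrightarrow> norm (g x) \<le> Bg"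
    and "0 \<le> Bf" "0 \<le> Bg"
  shows "(Bf * Lg + Bg * Lf)-lipschitz_on S (\<lambda>x. f x * g x)"
proof (rule lipschitz_onI)
  fix x y assume xy: "x \<in> S" "y \<in> S"
  have "f x * g x - f y * g y = f x * (g x - g y) + (f x - f y) * g y"
    by (simp add: algebra_simps)
  then have "dist (f x * g x) (f y * g y) \<le> norm (f x) * dist (g x) (g y) + dist (f x) (f y) * norm (g y)"
    by (metis dist_norm norm_mult_ineq norm_triangle_le add_mono)
  also have "\<dots> \<le> Bf * (Lg * dist x y) + (Lf * dist x y) * Bg"
    using xy assms lipschitz_on_nonneg[OF f]
    by (intro add_mono mult_mono lipschitz_onD[OF f] lipschitz_onD[OF g]) auto
  finally show "dist (f x * g x) (f y * g y) \<le> (Bf * Lg + Bg * Lf) * dist x y"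
    by (simp add: algebra_simps)
qed (use assms lipschitz_on_nonneg[OF f] lipschitz_on_nonneg[OF g] in auto)

lemma lipschitz_on_compose_into:
  "(D * C)-lipschitz_on U (\<lambda>x. g (f x))"
  if "C-lipschitz_on U f" "f ` U \<subseteq> T" "D-lipschitz_on T g"
  using lipschitz_on_compose2[OF that(1) lipschitz_on_subset[OF that(3,2)]] .

lemma lipschitz_on_triple:
  assumes "L1-lipschitz_on S f1" "L2-lipschitz_on S f2" "L3-lipschitz_on S f3"
  shows "\<exists>L. L-lipschitz_on S (\<lambda>z. (f1 z, f2 z, f3 z))"
  using lipschitz_on_Pair[OF assms(1) lipschitz_on_Pair[OF assms(2,3)]] by blast

lemma lipschitz_on_exp_neg:
  fixes \<sigma> :: real
  assumes "0 \<le> \<sigma>"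
  shows "\<sigma>-lipschitz_on {0..} (\<lambda>s. exp (- \<sigma> * s))"
proof (rule lipschitz_onI)
  fix x y :: real assume "x \<in> {0..}" "y \<in> {0..}"
  then have "norm (exp (- \<sigma> * x) - exp (- \<sigma> * y)) \<le> \<sigma> * norm (x - y)"
    using assms
    by (intro field_differentiable_bound[of "{0..}" _ "\<lambda>s. - \<sigma> * exp (- \<sigma> * s)"])
       (auto intro!: derivative_eq_intros simp: mult_left_le)
  then show "dist (exp (- \<sigma> * x)) (exp (- \<sigma> * y)) \<le> \<sigma> * dist x y"
    by (simp add: dist_norm)
qed fact

lemma lipschitz_on_inverse_shift:
  fixes c :: real
  assumes "0 < c"
  shows "(1 / c\<^sup>2)-lipschitz_on {0..} (\<lambda>s. 1 / (c + s))"
proof (rule lipschitz_onI)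
  fix x y :: real assume "x \<in> {0..}" "y \<in> {0..}"
  then have "norm (1 / (c + x) - 1 / (c + y)) \<le> 1 / c\<^sup>2 * norm (x - y)"
    using assms
    by (intro field_differentiable_bound[of "{0..}" _ "\<lambda>s. - 1 / (c + s)\<^sup>2"])
       (auto intro!: derivative_eq_intros frac_le mult_mono simp: power2_eq_square)
  then show "dist (1 / (c + x)) (1 / (c + y)) \<le> 1 / c\<^sup>2 * dist x y"
    by (simp add: dist_norm)
qed simp

section \<open>Global solutions of globally Lipschitz equations\<close>

lemma has_vector_derivative_within_Ici_if_Icc:
  assumes "(x has_vector_derivative v) (at t within {0..b})" "0 \<le> t" "t < (b::real)"
  shows "(x has_vector_derivative v) (at t within {0..})"
proof -
  have "at t within {0..b} = at t within ({0..}::real set)"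
    by (rule at_within_nhd[of t "{..<b}"]) (use assms in auto)
  with assms show ?thesis by simp
qed

lemma has_vector_derivative_if_integral_equation:
  fixes X g :: "real \<Rightarrow> 'a::banach"
  assumes X: "\<And>s. 0 \<le> s \<Longrightarrow> X s = x0 + integral {0..s} g" and g: "\<And>T. continuous_on {0..T} g"
    and t: "0 \<le> t"
  shows "(X has_vector_derivative g t) (at t within {0..})"
proof -
  have "((\<lambda>u. integral {0..u} g) has_vector_derivative g t) (at t within {0..t+1})"
    using t by (intro integral_has_vector_derivative g) auto
  then have "((\<lambda>u. x0 + integral {0..u} g) has_vector_derivative g t) (at t within {0..t+1})"
    by (auto intro!: derivative_eq_intros)
  then have "(X has_vector_derivative g t) (at t within {0..t+1})"
    by (rule has_vector_derivative_transform_within[of _ _ _ _ 1]) (use t X in auto)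
  then show ?thesis by (rule has_vector_derivative_within_Ici_if_Icc) (use t in auto)
qed

lemma has_integral_exp_series_term:
  fixes L c t :: real
  assumes "0 \<le> t"
  shows "((\<lambda>s. L * (c * (L * s) ^ n / fact n)) has_integral c * (L * t) ^ Suc n / fact (Suc n)) {0..t}"
proof -
  have "((\<lambda>s. L * (c * (L * s) ^ n / fact n)) has_integral
      c * (L * t) ^ Suc n / fact (Suc n) - c * (L * 0) ^ Suc n / fact (Suc n)) {0..t}"
  proof (rule fundamental_theorem_of_calculus[OF assms])
    fix s assume "s \<in> {0..t}"
    have "((\<lambda>s. c * (L * s) ^ Suc n / fact (Suc n)) has_real_derivative
        c * (Suc n * (L * s) ^ n * L) / fact (Suc n)) (at s within {0..t})"
      by (auto intro!: derivative_eq_intros simp del: fact_Suc power_Suc of_nat_Suc)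
    moreover have "c * (Suc n * (L * s) ^ n * L) / fact (Suc n) = L * (c * (L * s) ^ n / fact n)"
      by (simp add: field_simps del: of_nat_Suc)
    ultimately show "((\<lambda>s. c * (L * s) ^ Suc n / fact (Suc n)) has_vector_derivative
        L * (c * (L * s) ^ n / fact n)) (at s within {0..t})"
      by (simp only: DERIV_cong has_real_derivative_iff_has_vector_derivative[symmetric])
  qed
  then show ?thesis by simp
qed

primrec picard_iterate :: "('a::banach \<Rightarrow> 'a) \<Rightarrow> 'a \<Rightarrow> nat \<Rightarrow> real \<Rightarrow> 'a" where
  "picard_iterate f x0 0 t = x0"
| "picard_iterate f x0 (Suc n) t = x0 + integral {0..t} (\<lambda>s. f (picard_iterate f x0 n s))"

declare picard_iterate.simps(2) [simp del] \<comment> \<open>otherwise \<open>simp\<close> unfolds every iterate inside the integrands\<close>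

context
  fixes f :: "'a::banach \<Rightarrow> 'a" and L :: real and x0 :: 'a
  assumes lip: "L-lipschitz_on UNIV f" and L_pos: "0 < L"
begin

lemma continuous_on_picard_iterate: "continuous_on {0..T} (picard_iterate f x0 n)"
proof (induction n arbitrary: T)
  case 0
  have "picard_iterate f x0 0 = (\<lambda>t. x0)" by (rule ext) simp
  then show ?case by simp
next
  case (Suc n)
  have "continuous_on {0..T} (\<lambda>s. f (picard_iterate f x0 n s))"
    by (rule continuous_on_compose2[OF lipschitz_on_continuous_on[OF lip] Suc]) auto
  then have "continuous_on {0..T} (\<lambda>t. x0 + integral {0..t} (\<lambda>s. f (picard_iterate f x0 n s)))"
    by (auto intro!: continuous_intros indefinite_integral_continuous_1 integrable_continuous_real)
  moreover have "picard_iterate f x0 (Suc n) = (\<lambda>t. x0 + integral {0..t} (\<lambda>s. f (picard_iterate f x0 n s)))"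
    by (rule ext) (rule picard_iterate.simps(2))
  ultimately show ?case by simp
qed

lemma continuous_on_picard_iterate_field: "continuous_on {0..T} (\<lambda>s. f (picard_iterate f x0 n s))"
  by (rule continuous_on_compose2[OF lipschitz_on_continuous_on[OF lip] continuous_on_picard_iterate]) auto

lemma picard_iterate_step_bound:
  assumes "0 \<le> t"
  shows "norm (picard_iterate f x0 (Suc n) t - picard_iterate f x0 n t)
    \<le> norm (f x0) / L * (L * t) ^ Suc n / fact (Suc n)"
  using assms
proof (induction n arbitrary: t)
  case 0
  then show ?case using L_pos by (simp add: picard_iterate.simps(2))
next
  case (Suc n)
  let ?P = "picard_iterate f x0"
  have "?P (Suc (Suc n)) t - ?P (Suc n) t = integral {0..t} (\<lambda>s. f (?P (Suc n) s) - f (?P n s))"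
    unfolding picard_iterate.simps(2)[of f x0 "Suc n" t] picard_iterate.simps(2)[of f x0 n t]
    by (simp add: integral_diff integrable_continuous_real continuous_on_picard_iterate_field)
  also have "norm \<dots> \<le> integral {0..t} (\<lambda>s. L * (norm (f x0) / L * (L * s) ^ Suc n / fact (Suc n)))"
  proof (rule integral_norm_bound_integral)
    fix s assume s: "s \<in> {0..t}"
    have "norm (f (?P (Suc n) s) - f (?P n s)) \<le> L * norm (?P (Suc n) s - ?P n s)"
      by (rule lipschitz_on_normD[OF lip]) auto
    also have "\<dots> \<le> L * (norm (f x0) / L * (L * s) ^ Suc n / fact (Suc n))"
      using Suc.IH[of s] s L_pos by (intro mult_left_mono) auto
    finally show "norm (f (?P (Suc n) s) - f (?P n s)) \<le> \<dots>" .
  next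
    show "(\<lambda>s. f (?P (Suc n) s) - f (?P n s)) integrable_on {0..t}"
      by (intro integrable_continuous_real continuous_on_diff continuous_on_picard_iterate_field)
    show "(\<lambda>s. L * (norm (f x0) / L * (L * s) ^ Suc n / fact (Suc n))) integrable_on {0..t}"
      by (intro integrable_continuous_real continuous_intros) simp
  qed
  also have "\<dots> = norm (f x0) / L * (L * t) ^ Suc (Suc n) / fact (Suc (Suc n))"
    by (rule integral_unique[OF has_integral_exp_series_term[OF Suc.prems]])
  finally show ?case .
qed

lemma picard_iterate_uniform_limit:
  "\<exists>X. \<forall>T\<ge>0. uniform_limit {0..T} (picard_iterate f x0) X sequentially"
proof -
  let ?P = "picard_iterate f x0"
  define X where "X t = x0 + (\<Sum>i. ?P (Suc i) t - ?P i t)" for t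
  have "uniform_limit {0..T} ?P X sequentially" if T: "0 \<le> T" for T
  proof -
    define B where "B n = norm (f x0) / L * (L * T) ^ Suc n / fact (Suc n)" for n
    have "summable (\<lambda>n. (L * T) ^ n / fact n)"
      using summable_exp[of "L * T"] by (simp add: divide_inverse mult.commute)
    then have "summable (\<lambda>n. (L * T) ^ Suc n / fact (Suc n))"
      by (subst summable_Suc_iff)
    then have "summable B"
      unfolding B_def times_divide_eq_right[symmetric] by (rule summable_mult)
    then have "uniform_limit {0..T} (\<lambda>n t. \<Sum>i<n. ?P (Suc i) t - ?P i t)
        (\<lambda>t. \<Sum>i. ?P (Suc i) t - ?P i t) sequentially"
    proof (rule Weierstrass_m_test[rotated])
      fix n and t :: real assume t: "t \<in> {0..T}"
      then have "norm (?P (Suc n) t - ?P n t) \<le> norm (f x0) / L * (L * t) ^ Suc n / fact (Suc n)"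
        by (intro picard_iterate_step_bound) auto
      also have "\<dots> \<le> B n" unfolding B_def using L_pos t
        by (intro divide_right_mono mult_left_mono power_mono) auto
      finally show "norm (?P (Suc n) t - ?P n t) \<le> B n" .
    qed
    moreover have "(\<Sum>i<n. ?P (Suc i) t - ?P i t) = ?P n t - x0" for n t
      using sum_lessThan_telescope[of "\<lambda>i. ?P i t" n] by simp
    ultimately show ?thesis
      unfolding uniform_limit_iff X_def by (simp add: dist_norm algebra_simps)
  qed
  then show ?thesis by blast
qed

lemma picard_limit_integral_equation:
  assumes X: "\<And>T. 0 \<le> T \<Longrightarrow> uniform_limit {0..T} (picard_iterate f x0) X sequentially"
    and t: "0 \<le> t"
  shows "X t = x0 + integral {0..t} (\<lambda>s. f (X s))"
proof -
  let ?P = "picard_iterate f x0"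
  have ulim: "uniform_limit {0..t} (\<lambda>n s. f (?P n s)) (\<lambda>s. f (X s)) sequentially"
  proof (rule uniform_limitI)
    fix e :: real assume e: "0 < e"
    have "\<forall>\<^sub>F n in sequentially. \<forall>s\<in>{0..t}. dist (?P n s) (X s) < e / L"
      using uniform_limitD[OF X[OF t]] e L_pos by simp
    then show "\<forall>\<^sub>F n in sequentially. \<forall>s\<in>{0..t}. dist (f (?P n s)) (f (X s)) < e"
    proof (rule eventually_mono, intro ballI)
      fix n s assume "\<forall>s\<in>{0..t}. dist (?P n s) (X s) < e / L" "s \<in> {0..t}"
      then have "L * dist (?P n s) (X s) < e"
        using L_pos by (simp add: field_simps)
      then show "dist (f (?P n s)) (f (X s)) < e"
        using lipschitz_onD[OF lip, of "?P n s" "X s"] by simp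
    qed
  qed
  obtain I J where I: "\<And>n. ((\<lambda>s. f (?P n s)) has_integral I n) {0..t}"
    and J: "((\<lambda>s. f (X s)) has_integral J) {0..t}" and IJ: "I \<longlonglongrightarrow> J"
    using uniform_limit_integral[OF ulim continuous_on_picard_iterate_field] by auto
  have "?P (Suc n) t = x0 + I n" for n
    using integral_unique[OF I] by (simp add: picard_iterate.simps(2))
  moreover have "(\<lambda>n. x0 + I n) \<longlonglongrightarrow> x0 + J"
    using IJ by (intro tendsto_intros)
  ultimately have "(\<lambda>n. ?P (Suc n) t) \<longlonglongrightarrow> x0 + J"
    by simp
  moreover have "(\<lambda>n. ?P (Suc n) t) \<longlonglongrightarrow> X t"
    using LIMSEQ_Suc[OF tendsto_uniform_limitI[OF X[OF t]]] t by simp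
  ultimately show ?thesis
    using LIMSEQ_unique integral_unique[OF J] by blast
qed

end

lemma lipschitz_ode_solution_exists:
  fixes f :: "'a::banach \<Rightarrow> 'a"
  assumes "L-lipschitz_on UNIV f"
  shows "\<exists>x. x 0 = x0 \<and> (\<forall>t\<ge>0. (x has_vector_derivative f (x t)) (at t within {0..}))"
proof -
  have lip: "(L + 1)-lipschitz_on UNIV f"
    using assms by (rule lipschitz_on_le) simp
  have "0 < L + 1" using lipschitz_on_nonneg[OF assms] by simp
  then obtain X where X: "\<And>T. 0 \<le> T \<Longrightarrow> uniform_limit {0..T} (picard_iterate f x0) X sequentially"
    using picard_iterate_uniform_limit[OF lip] by blast
  have eq: "X s = x0 + integral {0..s} (\<lambda>s. f (X s))" if "0 \<le> s" for s
    by (rule picard_limit_integral_equation[OF lip \<open>0 < L + 1\<close> X that])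
  have "continuous_on {0..T} X" for T
  proof (cases "0 \<le> T")
    case True
    then show ?thesis
      by (intro uniform_limit_theorem[OF always_eventually X])
        (auto intro: continuous_on_picard_iterate[OF lip \<open>0 < L + 1\<close>])
  qed simp
  then have contfX: "continuous_on {0..T} (\<lambda>s. f (X s))" for T
    by (rule continuous_on_compose2[OF lipschitz_on_continuous_on[OF lip]]) auto
  have "(X has_vector_derivative f (X t)) (at t within {0..})" if "0 \<le> t" for t
    using has_vector_derivative_if_integral_equation[OF eq contfX that] by simp
  moreover have "X 0 = x0" using eq[of 0] by simp
  ultimately show ?thesis by blast
qed

section \<open>Differential inequalities\<close>

lemma has_field_derivative_at_if_within_Ici:
  assumes "(f has_field_derivative v) (at t within {0..})" "0 < (t::real)"
  shows "(f has_field_derivative v) (at t)"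
proof -
  have "at t within {0..} = at t within (UNIV::real set)"
    by (rule at_within_nhd[of t "{0<..}"]) (use assms in auto)
  with assms show ?thesis by simp
qed

lemma continuous_on_if_has_derivative_within_Ici:
  assumes "\<And>t. 0 \<le> t \<Longrightarrow> ((f::real \<Rightarrow> real) has_field_derivative f' t) (at t within {0..})" "0 \<le> a"
  shows "continuous_on {a..b} f"
  unfolding continuous_on_eq_continuous_within
proof
  fix t assume t: "t \<in> {a..b}"
  then have "continuous (at t within {0..}) f"
    using assms by (intro DERIV_continuous[OF assms(1)]) auto
  then show "continuous (at t within {a..b}) f"
    by (rule continuous_within_subset) (use assms in auto)
qed

lemma nonneg_if_deriv_nonneg_where_neg:
  fixes g g' :: "real \<Rightarrow> real"
  assumes D: "\<And>t. 0 \<le> t \<Longrightarrow> (g has_field_derivative g' t) (at t within {0..})"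
    and g0: "0 \<le> g 0"
    and neg: "\<And>t. 0 \<le> t \<Longrightarrow> g t < 0 \<Longrightarrow> 0 \<le> g' t"
    and t: "0 \<le> t"
  shows "0 \<le> g t"
proof (rule ccontr)
  assume "\<not> 0 \<le> g t"
  then have gt: "g t < 0" by simp
  define Z where "Z = {0..t} \<inter> g -` {0..}"
  have "closed Z"
    unfolding Z_def
    by (rule continuous_closed_preimage[OF continuous_on_if_has_derivative_within_Ici[OF D]]) auto
  moreover have "0 \<in> Z" using g0 t by (auto simp: Z_def)
  moreover have bdd: "bdd_above Z" unfolding Z_def by (auto intro: bdd_aboveI[of _ t])
  ultimately have "Sup Z \<in> Z" by (intro closed_contains_Sup) auto
  then have s: "0 \<le> Sup Z" "Sup Z < t" "0 \<le> g (Sup Z)"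
    using gt by (auto simp: Z_def intro: le_neq_trans)
  have after: "g x < 0" if "Sup Z < x" "x \<le> t" for x
    using cSup_upper[OF _ bdd, of x] that s by (force simp: Z_def)
  have "g (Sup Z) \<le> g t"
  proof (rule DERIV_nonneg_imp_increasing_open[OF less_imp_le[OF s(2)]])
    fix x assume x: "Sup Z < x" "x < t"
    then have "(g has_field_derivative g' x) (at x)"
      using D[of x] s by (intro has_field_derivative_at_if_within_Ici) auto
    moreover have "0 \<le> g' x" using neg[of x] after[of x] x s by auto
    ultimately show "\<exists>y. (g has_real_derivative y) (at x) \<and> 0 \<le> y" by blast
  qed (rule continuous_on_if_has_derivative_within_Ici[OF D s(1)])
  with s gt show False by simp
qed

lemma DERIV_le_linear_imp_zero:
  fixes V V' :: "real \<Rightarrow> real"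
  assumes D: "\<And>s. 0 \<le> s \<Longrightarrow> (V has_real_derivative V' s) (at s within {0..})"
    and le: "\<And>s. s \<in> {0..t} \<Longrightarrow> V' s \<le> c * V s"
    and nonneg: "\<And>s. 0 \<le> V s" and V0: "V 0 = 0" and t: "0 \<le> t"
  shows "V t = 0"
proof -
  define W where "W s = exp (- c * s) * V s" for s
  have DW: "(W has_real_derivative exp (- c * s) * (V' s - c * V s)) (at s within {0..})"
    if "0 \<le> s" for s
    unfolding W_def
    by (rule derivative_eq_intros D[OF that] refl | simp add: algebra_simps)+
  have "W t \<le> W 0"
  proof (rule DERIV_nonpos_imp_decreasing_open[OF t])
    fix s assume s: "0 < s" "s < t"
    then have "(W has_real_derivative exp (- c * s) * (V' s - c * V s)) (at s)"
      using DW[of s] by (intro has_field_derivative_at_if_within_Ici) auto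
    moreover have "exp (- c * s) * (V' s - c * V s) \<le> 0"
      using le[of s] s by (intro mult_nonneg_nonpos) auto
    ultimately show "\<exists>y. (W has_real_derivative y) (at s) \<and> y \<le> 0" by blast
  qed (rule continuous_on_if_has_derivative_within_Ici[OF DW order_refl])
  then show ?thesis
    using nonneg[of t] V0 by (simp add: W_def mult_le_0_iff)
qed

lemma has_real_derivative_pos_part_square:
  "((\<lambda>s. (max s 0)\<^sup>2) has_real_derivative 2 * max x 0) (at (x::real))"
proof -
  consider "x < 0" | "x = 0" | "0 < x" by fastforce
  then show ?thesis
  proof cases
    case 1
    have "((\<lambda>s. 0) has_real_derivative 2 * max x 0) (at x)" using 1 by simp
    then show ?thesis
      by (rule has_field_derivative_transform_within_open[of _ _ _ "{..<0}"]) (use 1 in auto)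
  next
    case 2
    have "((\<lambda>y. ((max y 0)\<^sup>2 - (max 0 0)\<^sup>2) / (y - 0)) \<longlongrightarrow> 0) (at (0::real))"
    proof (rule Lim_null_comparison)
      show "\<forall>\<^sub>F y in at 0. norm (((max y 0)\<^sup>2 - (max 0 0)\<^sup>2) / (y - 0)) \<le> \<bar>y\<bar>"
        by (intro always_eventually allI) (auto simp: max_def power2_eq_square abs_mult)
    qed (auto intro: tendsto_eq_intros)
    then show ?thesis using 2 by (simp add: has_field_derivative_iff)
  next
    case 3
    have "((\<lambda>s. s\<^sup>2) has_real_derivative 2 * max x 0) (at x)"
      using 3 by (auto intro!: derivative_eq_intros)
    then show ?thesis
      by (rule has_field_derivative_transform_within_open[of _ _ _ "{0<..}"]) (use 3 in auto)
  qed
qed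

lemma has_vector_derivative_components:
  fixes x :: "real \<Rightarrow> state"
  assumes "(x has_vector_derivative v) (at t within S)"
  shows "((\<lambda>t. fst (x t)) has_real_derivative fst v) (at t within S)"
    "((\<lambda>t. fst (snd (x t))) has_real_derivative fst (snd v)) (at t within S)"
    "((\<lambda>t. snd (snd (x t))) has_real_derivative snd (snd v)) (at t within S)"
proof -
  have "bounded_linear (\<lambda>z::state. fst (snd z))" "bounded_linear (\<lambda>z::state. snd (snd z))"
    using bounded_linear_compose[OF bounded_linear_fst bounded_linear_snd]
      bounded_linear_compose[OF bounded_linear_snd bounded_linear_snd] by (simp_all add: o_def)
  with bounded_linear_fst show
    "((\<lambda>t. fst (x t)) has_real_derivative fst v) (at t within S)"
    "((\<lambda>t. fst (snd (x t))) has_real_derivative fst (snd v)) (at t within S)"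
    "((\<lambda>t. snd (snd (x t))) has_real_derivative snd (snd v)) (at t within S)"
    using bounded_linear.has_vector_derivative[OF _ assms]
    by (simp_all add: has_real_derivative_iff_has_vector_derivative)
qed

lemma inner_state: "z \<bullet> w = fst z * fst w + fst (snd z) * fst (snd w) + snd (snd z) * snd (snd w)"
  for z w :: state
  by (cases z, cases w) (simp add: inner_Pair)

lemma norm_state_sq: "(norm z)\<^sup>2 = (fst z)\<^sup>2 + (fst (snd z))\<^sup>2 + (snd (snd z))\<^sup>2"
  for z :: state
  unfolding power2_norm_eq_inner inner_state by (simp add: power2_eq_square)

definition pos_excess :: "state \<Rightarrow> state \<Rightarrow> state" where
  "pos_excess X Y = (max (fst X - fst Y) 0, max (fst (snd X) - fst (snd Y)) 0, max (snd (snd X) - snd (snd Y)) 0)"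

lemma pos_excess_eq_0_iff: "pos_excess X Y = 0 \<longleftrightarrow> le3 X Y"
  by (auto simp: pos_excess_def le3_def zero_prod_def max_def)

lemma le3_if_excess_energy_le:
  fixes x y x' y' :: "real \<Rightarrow> state"
  assumes x: "\<And>s. 0 \<le> s \<Longrightarrow> (x has_vector_derivative x' s) (at s within {0..})"
    and y: "\<And>s. 0 \<le> s \<Longrightarrow> (y has_vector_derivative y' s) (at s within {0..})"
    and energy: "\<And>s. s \<in> {0..t} \<Longrightarrow>
      pos_excess (x s) (y s) \<bullet> (x' s - y' s) \<le> c * (norm (pos_excess (x s) (y s)))\<^sup>2"
    and xy0: "x 0 = y 0" and t: "0 \<le> t"
  shows "le3 (x t) (y t)"
proof -
  define V where "V s = (norm (pos_excess (x s) (y s)))\<^sup>2" for s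
  have "(V has_real_derivative 2 * (pos_excess (x s) (y s) \<bullet> (x' s - y' s))) (at s within {0..})"
    if "0 \<le> s" for s
  proof -
    note Dx = has_vector_derivative_components[OF x[OF that]]
      and Dy = has_vector_derivative_components[OF y[OF that]]
    note d = DERIV_chain2[OF has_real_derivative_pos_part_square DERIV_diff[OF Dx(1) Dy(1)]]
      DERIV_chain2[OF has_real_derivative_pos_part_square DERIV_diff[OF Dx(2) Dy(2)]]
      DERIV_chain2[OF has_real_derivative_pos_part_square DERIV_diff[OF Dx(3) Dy(3)]]
    show ?thesis
      unfolding V_def norm_state_sq inner_state pos_excess_def fst_conv snd_conv
      by (rule DERIV_cong[OF DERIV_add[OF DERIV_add[OF d(1,2)] d(3)]]) (simp add: algebra_simps)
  qed
  moreover have "2 * (pos_excess (x s) (y s) \<bullet> (x' s - y' s)) \<le> 2 * c * V s" if "s \<in> {0..t}" for s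
    using energy[OF that] by (simp add: V_def)
  moreover have "0 \<le> V s" for s by (simp add: V_def)
  moreover have "V 0 = 0" by (simp add: V_def xy0 pos_excess_eq_0_iff[THEN iffD2] le3_def)
  ultimately have "V t = 0"
    using t by (rule DERIV_le_linear_imp_zero)
  then show ?thesis by (simp add: V_def pos_excess_eq_0_iff)
qed

lemma mult_exp_neg_le_inverse:
  fixes c \<sigma> :: real
  assumes "0 \<le> c" "0 < \<sigma>"
  shows "c * exp (- \<sigma> * c) \<le> 1 / \<sigma>"
proof -
  have "\<sigma> * c \<le> exp (\<sigma> * c)"
    using exp_ge_add_one_self[of "\<sigma> * c"] by linarith
  then have "\<sigma> * c * exp (- (\<sigma> * c)) \<le> exp (\<sigma> * c) * exp (- (\<sigma> * c))"
    by (rule mult_right_mono) simp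
  then have "\<sigma> * (c * exp (- \<sigma> * c)) \<le> 1"
    by (simp add: exp_minus mult.assoc)
  then show ?thesis using assms by (simp add: field_simps)
qed

lemma exp_weighted_diff_le:
  fixes U u S m \<sigma> :: real
  assumes "0 \<le> U" "0 \<le> u" "0 \<le> m" "m \<le> S" "0 \<le> \<sigma>"
  shows "U * exp (- \<sigma> * S) - u * exp (- \<sigma> * m) \<le> max (U - u) 0"
proof -
  have le1: "exp (- \<sigma> * S) \<le> 1" using assms by simp
  have "u * exp (- \<sigma> * S) \<le> u * exp (- \<sigma> * m)"
    using assms by (intro mult_left_mono) (auto intro: mult_left_mono)
  moreover have "(U - u) * exp (- \<sigma> * S) \<le> max (U - u) 0"
    using le1 by (cases "U \<le> u") (auto intro: mult_nonpos_nonneg mult_left_le)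
  ultimately show ?thesis by (simp add: algebra_simps)
qed

lemma saturation_diff_le:
  fixes Ap A a :: real
  assumes "0 < Ap" "0 \<le> A" "0 \<le> a"
  shows "Ap / (Ap + a) - Ap / (Ap + A) \<le> max (A - a) 0 / Ap"
proof (cases "A \<le> a")
  case True
  then have "Ap / (Ap + a) \<le> Ap / (Ap + A)" using assms by (intro divide_left_mono) auto
  then show ?thesis using True by (simp add: max_def)
next
  case False
  have "Ap + A \<noteq> 0" "Ap + a \<noteq> 0" using assms by auto
  then have "Ap / (Ap + a) - Ap / (Ap + A) = Ap * (A - a) / ((Ap + a) * (Ap + A))"
    by (simp add: divide_simps) (simp add: algebra_simps)
  also have "\<dots> \<le> Ap * (A - a) / (Ap * Ap)"
    using assms False by (intro divide_left_mono mult_mono) auto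
  finally show ?thesis using assms False by simp
qed

lemma saturation_diff_weighted_le:
  fixes Ap A a m R :: real
  assumes "0 < Ap" "0 \<le> A" "0 \<le> a" "0 \<le> m" "m \<le> R"
  shows "m * (Ap / (Ap + a) - Ap / (Ap + A)) \<le> R * (max (A - a) 0 / Ap)"
proof -
  have "m * (Ap / (Ap + a) - Ap / (Ap + A)) \<le> m * (max (A - a) 0 / Ap)"
    using assms saturation_diff_le[of Ap A a] by (intro mult_left_mono) auto
  also have "\<dots> \<le> R * (max (A - a) 0 / Ap)"
    using assms by (intro mult_right_mono) auto
  finally show ?thesis .
qed

lemma saturated_product_diff_le:
  fixes Ap A a M m R :: real
  assumes "0 < Ap" "0 \<le> A" "0 \<le> a" "0 \<le> m" "m \<le> R"
  shows "M * A / (Ap + A) - m * a / (Ap + a) \<le> max (M - m) 0 + R * (max (A - a) 0 / Ap)"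
proof -
  have "Ap + A \<noteq> 0" "Ap + a \<noteq> 0" using assms by auto
  then have "M * A / (Ap + A) - m * a / (Ap + a)
      = (M - m) * (A / (Ap + A)) + m * (Ap / (Ap + a) - Ap / (Ap + A))"
    by (simp add: divide_simps) (simp add: algebra_simps)
  moreover have a: "0 \<le> A / (Ap + A)" "A / (Ap + A) \<le> 1" using assms by auto
  then have "(M - m) * (A / (Ap + A)) \<le> max (M - m) 0"
    using mult_nonpos_nonneg[of "M - m" "A / (Ap + A)"] mult_left_le[OF a(2), of "M - m"]
    by (cases "M \<le> m") auto
  moreover have "m * (Ap / (Ap + a) - Ap / (Ap + A)) \<le> R * (max (A - a) 0 / Ap)"
    using assms by (rule saturation_diff_weighted_le)
  ultimately show ?thesis by linarith
qed

lemma sum_square_le_three_sum_squares: "((a::real) + b + c)\<^sup>2 \<le> 3 * (a\<^sup>2 + b\<^sup>2 + c\<^sup>2)"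
proof -
  have "0 \<le> (a - b)\<^sup>2 + (b - c)\<^sup>2 + (a - c)\<^sup>2" by simp
  then show ?thesis by (simp add: power2_eq_square algebra_simps)
qed

section \<open>Global nonnegative solutions of the full system\<close>

lemma mem_cube:
  "(M, A, U) \<in> cbox (0::state) (K, K, K) \<longleftrightarrow> 0 \<le> M \<and> M \<le> K \<and> 0 \<le> A \<and> A \<le> K \<and> 0 \<le> U \<and> U \<le> K"
  by (simp add: zero_prod_def cbox_Pair_iff)

lemma clamp_cube:
  fixes K :: real
  assumes "0 \<le> K"
  shows "clamp 0 (K, K, K) (M, A, U) = (max 0 (min K M), max 0 (min K A), max 0 (min K U))"
  using assms by (simp add: clamp_def Basis_prod_def inner_Pair zero_prod_def)

lemma mem_R3plus: "z \<in> R3plus \<longleftrightarrow> 0 \<le> fst z \<and> 0 \<le> fst (snd z) \<and> 0 \<le> snd (snd z)"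
  by (cases z) (simp add: R3plus_def)

lemma norm_le_if_le3:
  assumes "X \<in> R3plus" "le3 X Y"
  shows "norm X \<le> norm Y"
proof -
  obtain a b c a' b' c' where X: "X = (a, b, c)" and Y: "Y = (a', b', c')"
    by (cases X, cases Y) auto
  have "0 \<le> a" "a \<le> a'" "0 \<le> b" "b \<le> b'" "0 \<le> c" "c \<le> c'"
    using assms by (auto simp: X Y R3plus_def le3_def)
  then show ?thesis
    unfolding X Y norm_Pair by (intro real_sqrt_le_mono add_mono power_mono) auto
qed

lemma E0_eq_zero: "E0 = 0"
  by (simp add: E0_def zero_prod_def)

locale male_scarcity =
  fixes r \<rho> \<sigma> \<mu> \<delta> \<nu> \<eta> \<gamma> \<alpha> Ap :: real
  assumes params: "0 \<le> r" "r \<le> 1" "0 \<le> \<rho>" "0 < \<sigma>" "0 < \<mu>" "0 < \<delta>" "0 \<le> \<nu>" "0 \<le> \<eta>" "0 \<le> \<gamma>"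
    "0 \<le> \<alpha>" "0 < Ap"
begin

abbreviation F :: "state \<Rightarrow> state" where "F \<equiv> full_field r \<rho> \<sigma> \<mu> \<delta> \<nu> \<eta> \<gamma> \<alpha> Ap"
abbreviation G :: "state \<Rightarrow> state" where "G \<equiv> aux_field r \<rho> \<sigma> \<mu> \<delta> \<nu> \<eta> \<gamma> \<alpha> Ap"

lemma full_field_lipschitz_on_cube:
  assumes "0 \<le> K"
  shows "\<exists>L. L-lipschitz_on (cbox 0 (K, K, K)) F"
proof -
  have bounds: "0 \<le> \<sigma>" "0 < Ap" "0 \<le> K" using params assms by auto
  let ?S = "cbox (0::state) (K, K, K)"
  have box: "0 \<le> fst z" "fst z \<le> K" "0 \<le> fst (snd z)" "fst (snd z) \<le> K" "0 \<le> snd (snd z)" "snd (snd z) \<le> K"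
    if "z \<in> ?S" for z
    using that by (cases z; simp add: mem_cube)+
  have M: "1-lipschitz_on ?S (\<lambda>z. fst z)" and A: "1-lipschitz_on ?S (\<lambda>z. fst (snd z))"
    and U: "1-lipschitz_on ?S (\<lambda>z. snd (snd z))"
    by (intro lipschitz_intros)+
  have E: "(\<sigma> * (1 + 1 + 1))-lipschitz_on ?S (\<lambda>z. exp (- \<sigma> * (fst z + fst (snd z) + snd (snd z))))"
    using box by (intro lipschitz_on_compose_into[OF lipschitz_on_add[OF lipschitz_on_add[OF M A] U]
          _ lipschitz_on_exp_neg] bounds) (auto simp: image_subset_iff)
  have UE: "(K * (\<sigma> * (1 + 1 + 1)) + 1 * 1)-lipschitz_on ?S
      (\<lambda>z. snd (snd z) * exp (- \<sigma> * (fst z + fst (snd z) + snd (snd z))))"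
    by (rule lipschitz_on_mult_bounded[OF U E]) (use box bounds in auto)
  have Q: "(1 / Ap\<^sup>2 * 1)-lipschitz_on ?S (\<lambda>z. 1 / (Ap + fst (snd z)))"
    using box by (intro lipschitz_on_compose_into[OF A _ lipschitz_on_inverse_shift] bounds) auto
  have Q_le: "norm (1 / (Ap + fst (snd z))) \<le> 1 / Ap" if "z \<in> ?S" for z
    using box(3)[OF that] bounds by (simp add: frac_le)
  have QM: "(1 / Ap * 1 + K * (1 / Ap\<^sup>2 * 1))-lipschitz_on ?S (\<lambda>z. 1 / (Ap + fst (snd z)) * fst z)"
    by (rule lipschitz_on_mult_bounded[OF Q M]) (use box bounds Q_le in auto)
  have QMA: "(K / Ap * 1 + K * (1 / Ap * 1 + K * (1 / Ap\<^sup>2 * 1)))-lipschitz_on ?S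
      (\<lambda>z. 1 / (Ap + fst (snd z)) * fst z * fst (snd z))"
    by (rule lipschitz_on_mult_bounded[OF QM A])
      (use box bounds in \<open>auto simp: divide_right_mono frac_le\<close>)
  have eq: "F z =
    (r * \<rho> * (snd (snd z) * exp (- \<sigma> * (fst z + fst (snd z) + snd (snd z))))
       - \<alpha> * Ap * (1 / (Ap + fst (snd z)) * fst z) - \<mu> * fst z,
     (1 - r) * \<rho> * (snd (snd z) * exp (- \<sigma> * (fst z + fst (snd z) + snd (snd z))))
       - \<nu> * \<gamma> * (1 / (Ap + fst (snd z)) * fst z * fst (snd z)) + \<eta> * snd (snd z) - \<delta> * fst (snd z),
     \<nu> * \<gamma> * (1 / (Ap + fst (snd z)) * fst z * fst (snd z)) - \<eta> * snd (snd z) - \<delta> * snd (snd z))" for z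
    by (cases z) (simp add: full_field_def)
  show ?thesis
    unfolding eq
    by (rule lipschitz_on_triple; (rule lipschitz_on_diff lipschitz_on_add lipschitz_on_cmult_real UE QM QMA M A U)+)
qed

lemma full_field_nonneg_on_faces:
  assumes "0 \<le> M" "0 \<le> A" "0 \<le> U"
  shows "0 \<le> fst (F (0, A, U))" "0 \<le> fst (snd (F (M, 0, U)))" "0 \<le> snd (snd (F (M, A, 0)))"
  using assms params by (simp_all add: full_field_def)

lemma full_field_total_le:
  assumes "0 \<le> M" "0 \<le> A" "0 \<le> U"
  shows "fst (F (M, A, U)) + fst (snd (F (M, A, U))) + snd (snd (F (M, A, U)))
    \<le> \<rho> / \<sigma> - min \<mu> \<delta> * (M + A + U)"
proof -
  have "exp (- \<sigma> * (M + A + U)) \<le> exp (- \<sigma> * U)"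
    using assms params by (simp add: mult_left_mono)
  then have "U * exp (- \<sigma> * (M + A + U)) \<le> 1 / \<sigma>"
    using mult_exp_neg_le_inverse[of U \<sigma>] assms params by (meson mult_left_mono order_trans)
  then have "\<rho> * (U * exp (- \<sigma> * (M + A + U))) \<le> \<rho> / \<sigma>"
    using params mult_left_mono by fastforce
  moreover have "min \<mu> \<delta> * (M + A + U) \<le> \<mu> * M + \<delta> * A + \<delta> * U"
    using assms by (simp add: distrib_left add_mono mult_right_mono)
  moreover have "0 \<le> \<alpha> * (Ap / (Ap + A)) * M"
    using assms params by simp
  moreover have "fst (F (M, A, U)) + fst (snd (F (M, A, U))) + snd (snd (F (M, A, U)))
      = \<rho> * (U * exp (- \<sigma> * (M + A + U))) - \<alpha> * (Ap / (Ap + A)) * M - (\<mu> * M + \<delta> * A + \<delta> * U)"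
    by (simp add: full_field_def algebra_simps)
  ultimately show ?thesis by linarith
qed

lemma clamped_solution_nonneg:
  assumes x: "\<And>t. 0 \<le> t \<Longrightarrow> (x has_vector_derivative F (clamp 0 (K, K, K) (x t))) (at t within {0..})"
    and x0: "x 0 \<in> R3plus" and K: "0 \<le> K" and t: "0 \<le> t"
  shows "x t \<in> R3plus"
proof -
  have c: "clamp 0 (K, K, K) (x s) = (max 0 (min K (fst (x s))), max 0 (min K (fst (snd (x s)))),
      max 0 (min K (snd (snd (x s)))))" for s
    using clamp_cube[OF K, of "fst (x s)" "fst (snd (x s))" "snd (snd (x s))"] by simp
  have c0: "max 0 (min K v) = 0" if "v < 0" for v using that K by simp
  have c_nonneg: "0 \<le> max 0 (min K v)" for v by simp
  note D = has_vector_derivative_components[OF x]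
  have "0 \<le> fst (F (clamp 0 (K, K, K) (x s)))" if "fst (x s) < 0" for s
    using full_field_nonneg_on_faces(1)[OF order_refl c_nonneg c_nonneg] by (simp only: c c0[OF that])
  then have "0 \<le> fst (x t)"
    using x0 by (intro nonneg_if_deriv_nonneg_where_neg[OF D(1) _ _ t]) (auto simp: mem_R3plus)
  moreover have "0 \<le> fst (snd (F (clamp 0 (K, K, K) (x s))))" if "fst (snd (x s)) < 0" for s
    using full_field_nonneg_on_faces(2)[OF c_nonneg order_refl c_nonneg] by (simp only: c c0[OF that])
  then have "0 \<le> fst (snd (x t))"
    using x0 by (intro nonneg_if_deriv_nonneg_where_neg[OF D(2) _ _ t]) (auto simp: mem_R3plus)
  moreover have "0 \<le> snd (snd (F (clamp 0 (K, K, K) (x s))))" if "snd (snd (x s)) < 0" for s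
    using full_field_nonneg_on_faces(3)[OF c_nonneg c_nonneg order_refl] by (simp only: c c0[OF that])
  then have "0 \<le> snd (snd (x t))"
    using x0 by (intro nonneg_if_deriv_nonneg_where_neg[OF D(3) _ _ t]) (auto simp: mem_R3plus)
  ultimately show ?thesis by (simp add: mem_R3plus)
qed

lemma clamped_solution_total_le:
  assumes x: "\<And>t. 0 \<le> t \<Longrightarrow> (x has_vector_derivative F (clamp 0 (K, K, K) (x t))) (at t within {0..})"
    and x0: "x 0 \<in> R3plus" "fst (x 0) + fst (snd (x 0)) + snd (snd (x 0)) \<le> B"
    and B: "B < K" "\<rho> / \<sigma> < min \<mu> \<delta> * B" and t: "0 \<le> t"
  shows "fst (x t) + fst (snd (x t)) + snd (snd (x t)) \<le> B"
proof -
  have K: "0 \<le> K" using x0 B by (auto simp: mem_R3plus)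
  note D = has_vector_derivative_components[OF x]
  let ?F = "\<lambda>s. F (clamp 0 (K, K, K) (x s))"
  have DS: "((\<lambda>s. B - (fst (x s) + fst (snd (x s)) + snd (snd (x s)))) has_real_derivative
      0 - (fst (?F s) + fst (snd (?F s)) + snd (snd (?F s)))) (at s within {0..})" if "0 \<le> s" for s
    by (intro DERIV_diff DERIV_add DERIV_const D that)
  have "0 \<le> 0 - (fst (?F s) + fst (snd (?F s)) + snd (snd (?F s)))"
    if s: "0 \<le> s" and large: "B - (fst (x s) + fst (snd (x s)) + snd (snd (x s))) < 0" for s
  proof -
    obtain M A U where xs: "x s = (M, A, U)" by (cases "x s")
    have nonneg: "0 \<le> M" "0 \<le> A" "0 \<le> U"
      using clamped_solution_nonneg[OF x x0(1) K s] by (simp_all add: xs mem_R3plus)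
    define c where "c v = max 0 (min K v)" for v
    have clamped: "clamp 0 (K, K, K) (x s) = (c M, c A, c U)"
      by (simp add: xs c_def clamp_cube[OF K])
    have "B < c M + c A + c U"
      using large nonneg B(1) by (auto simp: xs c_def min_def)
    then have "min \<mu> \<delta> * B < min \<mu> \<delta> * (c M + c A + c U)"
      using params by simp
    moreover have "fst (?F s) + fst (snd (?F s)) + snd (snd (?F s)) \<le> \<rho> / \<sigma> - min \<mu> \<delta> * (c M + c A + c U)"
      unfolding clamped by (rule full_field_total_le) (simp_all add: c_def)
    ultimately show ?thesis using B(2) by linarith
  qed
  then have "0 \<le> B - (fst (x t) + fst (snd (x t)) + snd (snd (x t)))"
    using x0(2) by (intro nonneg_if_deriv_nonneg_where_neg[OF DS _ _ t]) auto
  then show ?thesis by simp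
qed

lemma full_solution_exists:
  assumes X0: "X0 \<in> R3plus"
  shows "\<exists>x. is_solution F x \<and> x 0 = X0"
proof -
  define S0 where "S0 = fst X0 + fst (snd X0) + snd (snd X0)"
  define B where "B = max S0 (\<rho> / (\<sigma> * min \<mu> \<delta>)) + 1"
  define K where "K = B + 1"
  have S0: "S0 \<le> B" and "B < K" and "0 \<le> K"
    using X0 by (auto simp: B_def K_def S0_def mem_R3plus)
  have "\<rho> / (\<sigma> * min \<mu> \<delta>) < B" by (simp add: B_def)
  then have B_large: "\<rho> / \<sigma> < min \<mu> \<delta> * B"
    using params by (simp add: field_simps)
  let ?cube = "cbox (0::state) (K, K, K)"
  have clamp_in: "clamp 0 (K, K, K) z \<in> ?cube" for z
    using \<open>0 \<le> K\<close> by (cases z) (simp add: clamp_cube mem_cube)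
  obtain L where L: "L-lipschitz_on ?cube F"
    using full_field_lipschitz_on_cube[OF \<open>0 \<le> K\<close>] by blast
  have "1-lipschitz_on UNIV (clamp 0 (K, K, K))"
    by (rule lipschitz_onI) (auto simp: dist_clamps_le_dist_args)
  then have "(L * 1)-lipschitz_on UNIV (\<lambda>z. F (clamp 0 (K, K, K) z))"
    by (rule lipschitz_on_compose_into) (use clamp_in L in auto)
  then obtain x where x0: "x 0 = X0"
    and x: "\<And>t. 0 \<le> t \<Longrightarrow> (x has_vector_derivative F (clamp 0 (K, K, K) (x t))) (at t within {0..})"
    using lipschitz_ode_solution_exists by blast
  have nonneg: "x t \<in> R3plus" if t: "0 \<le> t" for t
    using clamped_solution_nonneg[OF x _ \<open>0 \<le> K\<close> t] X0 x0 by simp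
  have "x t \<in> ?cube" if t: "0 \<le> t" for t
  proof -
    have "fst (x t) + fst (snd (x t)) + snd (snd (x t)) \<le> B"
      using clamped_solution_total_le[OF x _ _ \<open>B < K\<close> B_large t] X0 x0 S0 by (simp add: S0_def)
    then show ?thesis
      using nonneg[OF t] \<open>B < K\<close> by (cases "x t") (auto simp: mem_R3plus mem_cube)
  qed
  then have "is_solution F x"
    unfolding is_solution_def using x nonneg by simp
  with x0 show ?thesis by blast
qed

section \<open>Comparison with the auxiliary system\<close>

lemma full_aux_M_excess:
  assumes "0 \<le> M" "0 \<le> A" "0 \<le> U" "0 \<le> M'" "0 \<le> A'" "0 \<le> U'" "M' \<le> M" "M' \<le> R"
  shows "fst (F (M, A, U)) - fst (G (M', A', U'))
    \<le> r * \<rho> * max (U - U') 0 + \<alpha> * (R * (max (A - A') 0 / Ap))"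
proof -
  have "U * exp (- \<sigma> * (M + A + U)) - U' * exp (- \<sigma> * M') \<le> max (U - U') 0"
    by (rule exp_weighted_diff_le) (use assms params in auto)
  then have "r * \<rho> * (U * exp (- \<sigma> * (M + A + U)) - U' * exp (- \<sigma> * M')) \<le> r * \<rho> * max (U - U') 0"
    using params by (intro mult_left_mono) auto
  moreover have "Ap / (Ap + A) * M' \<le> Ap / (Ap + A) * M"
    using assms params by (intro mult_left_mono) auto
  then have "Ap / (Ap + A') * M' - Ap / (Ap + A) * M \<le> M' * (Ap / (Ap + A') - Ap / (Ap + A))"
    by (simp add: right_diff_distrib mult.commute)
  then have "\<alpha> * (Ap / (Ap + A') * M' - Ap / (Ap + A) * M) \<le> \<alpha> * (R * (max (A - A') 0 / Ap))"
    using saturation_diff_weighted_le[of Ap A A' M' R] assms params by (intro mult_left_mono) auto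
  moreover have "0 \<le> \<mu> * (M - M')" using assms params by simp
  moreover have "fst (F (M, A, U)) - fst (G (M', A', U'))
      = r * \<rho> * (U * exp (- \<sigma> * (M + A + U)) - U' * exp (- \<sigma> * M'))
        + \<alpha> * (Ap / (Ap + A') * M' - Ap / (Ap + A) * M) - \<mu> * (M - M')"
    by (simp add: full_field_def aux_field_def algebra_simps)
  ultimately show ?thesis by linarith
qed

lemma full_aux_A_excess:
  assumes "0 \<le> M" "0 \<le> A" "0 \<le> U" "0 \<le> U'" "A' \<le> A"
  shows "fst (snd (F (M, A, U))) - fst (snd (G (M', A', U'))) \<le> ((1 - r) * \<rho> + \<eta>) * max (U - U') 0"
proof -
  define E where "E = exp (- \<sigma> * (M + A + U))"
  have "U * E \<le> U"
    using assms params by (auto simp: E_def intro: mult_left_le)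
  then have "(1 - r) * \<rho> * (U * E - U') \<le> (1 - r) * \<rho> * max (U - U') 0"
    using params by (intro mult_left_mono) auto
  moreover have "\<eta> * (U - U') \<le> \<eta> * max (U - U') 0" using params by (intro mult_left_mono) auto
  moreover have "0 \<le> \<nu> * (\<gamma> * M / (Ap + A)) * A" "0 \<le> \<delta> * (A - A')" using assms params by simp_all
  moreover have "fst (snd (F (M, A, U))) - fst (snd (G (M', A', U')))
      = (1 - r) * \<rho> * (U * E - U') - \<nu> * (\<gamma> * M / (Ap + A)) * A + \<eta> * (U - U') - \<delta> * (A - A')"
  proof -
    have "fst (snd (F (M, A, U))) = (1 - r) * \<rho> * U * E - \<nu> * (\<gamma> * M / (Ap + A)) * A + \<eta> * U - \<delta> * A"
      by (simp add: full_field_def E_def)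
    then show ?thesis by (simp add: aux_field_def algebra_simps)
  qed
  ultimately show ?thesis by (simp add: algebra_simps)
qed

lemma full_aux_U_excess:
  assumes "0 \<le> A" "0 \<le> M'" "0 \<le> A'" "U' \<le> U" "M' \<le> R"
  shows "snd (snd (F (M, A, U))) - snd (snd (G (M', A', U')))
    \<le> \<nu> * \<gamma> * (max (M - M') 0 + R * (max (A - A') 0 / Ap))"
proof -
  have "\<nu> * \<gamma> * (M * A / (Ap + A) - M' * A' / (Ap + A'))
      \<le> \<nu> * \<gamma> * (max (M - M') 0 + R * (max (A - A') 0 / Ap))"
    using saturated_product_diff_le[of Ap A A' M' R M] assms params by (intro mult_left_mono) auto
  moreover have "0 \<le> (\<eta> + \<delta>) * (U - U')" using assms params by simp
  moreover have "snd (snd (F (M, A, U))) - snd (snd (G (M', A', U')))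
      = \<nu> * \<gamma> * (M * A / (Ap + A) - M' * A' / (Ap + A')) - (\<eta> + \<delta>) * (U - U')"
    by (simp add: full_field_def aux_field_def algebra_simps)
  ultimately show ?thesis by linarith
qed

lemma full_aux_excess_le_rate:
  fixes M A U M' A' U' R :: real
  defines "C \<equiv> \<rho> + \<eta> + \<nu> * \<gamma> + (\<alpha> + \<nu> * \<gamma>) * (R / Ap)"
    and "P \<equiv> max (M - M') 0 + max (A - A') 0 + max (U - U') 0"
  assumes "0 \<le> M" "0 \<le> A" "0 \<le> U" "0 \<le> M'" "0 \<le> A'" "0 \<le> U'" "M' \<le> R"
  shows "M' \<le> M \<Longrightarrow> fst (F (M, A, U)) - fst (G (M', A', U')) \<le> C * P"
    and "A' \<le> A \<Longrightarrow> fst (snd (F (M, A, U))) - fst (snd (G (M', A', U'))) \<le> C * P"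
    and "U' \<le> U \<Longrightarrow> snd (snd (F (M, A, U))) - snd (snd (G (M', A', U'))) \<le> C * P"
proof -
  define pM pA pU q where "pM = max (M - M') 0" and "pA = max (A - A') 0" and "pU = max (U - U') 0"
    and "q = R / Ap"
  have p: "0 \<le> pM" "0 \<le> pA" "0 \<le> pU" "0 \<le> q"
    using assms params by (auto simp: pM_def pA_def pU_def q_def)
  have Rq: "R * (pA / Ap) = q * pA" by (simp add: q_def)
  have prods: "0 \<le> \<rho> * pU" "0 \<le> \<eta> * pU" "0 \<le> \<nu> * \<gamma> * pM" "0 \<le> \<alpha> * q * pA"
    "0 \<le> \<nu> * \<gamma> * q * pA" "0 \<le> \<rho> * pM + \<rho> * pA" "0 \<le> \<eta> * pM + \<eta> * pA"
    "0 \<le> \<nu> * \<gamma> * (pA + pU)" "0 \<le> \<alpha> * q * (pM + pU)" "0 \<le> \<nu> * \<gamma> * q * (pM + pU)"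
    using p params by simp_all
  have CP: "C * P = \<rho> * pU + \<eta> * pU + \<nu> * \<gamma> * pM + \<alpha> * q * pA + \<nu> * \<gamma> * q * pA
      + (\<rho> * pM + \<rho> * pA) + (\<eta> * pM + \<eta> * pA) + \<nu> * \<gamma> * (pA + pU)
      + \<alpha> * q * (pM + pU) + \<nu> * \<gamma> * q * (pM + pU)"
    by (simp add: C_def P_def pM_def pA_def pU_def q_def algebra_simps)
  have r: "r * \<rho> * pU \<le> \<rho> * pU" "(1 - r) * \<rho> * pU \<le> \<rho> * pU"
    using mult_left_le_one_le[of "\<rho> * pU" r] mult_left_le_one_le[of "\<rho> * pU" "1 - r"] params p
    by (simp_all add: mult.assoc)
  show "fst (F (M, A, U)) - fst (G (M', A', U')) \<le> C * P" if "M' \<le> M"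
    using full_aux_M_excess[OF assms(3-8) that assms(9)] r prods
    unfolding CP pU_def[symmetric] pA_def[symmetric] Rq by (simp add: mult.assoc)
  show "fst (snd (F (M, A, U))) - fst (snd (G (M', A', U'))) \<le> C * P" if "A' \<le> A"
    using full_aux_A_excess[OF assms(3-5) assms(8) that, where M' = M'] r prods
    unfolding CP pU_def[symmetric] by (simp add: distrib_right)
  show "snd (snd (F (M, A, U))) - snd (snd (G (M', A', U'))) \<le> C * P" if "U' \<le> U"
    using full_aux_U_excess[OF assms(4) assms(6,7) that assms(9), where M = M] prods
    unfolding CP pM_def[symmetric] pA_def[symmetric] Rq by (simp add: distrib_left mult.assoc)
qed

lemma full_aux_excess_energy:
  assumes "X \<in> R3plus" "Y \<in> R3plus" "fst Y \<le> R"
  shows "pos_excess X Y \<bullet> (F X - G Y)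
    \<le> 3 * (\<rho> + \<eta> + \<nu> * \<gamma> + (\<alpha> + \<nu> * \<gamma>) * (R / Ap)) * (norm (pos_excess X Y))\<^sup>2"
proof -
  obtain M A U M' A' U' where X: "X = (M, A, U)" and Y: "Y = (M', A', U')"
    by (cases X, cases Y) auto
  define C where "C = \<rho> + \<eta> + \<nu> * \<gamma> + (\<alpha> + \<nu> * \<gamma>) * (R / Ap)"
  define pM pA pU where "pM = max (M - M') 0" and "pA = max (A - A') 0" and "pU = max (U - U') 0"
  define P where "P = pM + pA + pU"
  have nonneg: "0 \<le> M" "0 \<le> A" "0 \<le> U" "0 \<le> M'" "0 \<le> A'" "0 \<le> U'" "M' \<le> R"
    using assms by (auto simp: X Y mem_R3plus)
  note rate = full_aux_excess_le_rate[OF nonneg, folded C_def pM_def pA_def pU_def P_def]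
  have "0 \<le> C" using nonneg params by (simp add: C_def)
  have "pos_excess X Y \<bullet> (F X - G Y)
      = pM * (fst (F X) - fst (G Y)) + pA * (fst (snd (F X)) - fst (snd (G Y)))
        + pU * (snd (snd (F X)) - snd (snd (G Y)))"
    by (simp add: inner_state pos_excess_def pM_def pA_def pU_def X Y)
  also have "\<dots> \<le> pM * (C * P) + pA * (C * P) + pU * (C * P)"
    using rate unfolding X Y pM_def pA_def pU_def
    by (intro add_mono; cases "M' \<le> M"; cases "A' \<le> A"; cases "U' \<le> U"; simp add: mult_left_mono)
  also have "\<dots> = C * P\<^sup>2"
    by (simp add: P_def power2_eq_square algebra_simps)
  also have "\<dots> \<le> C * (3 * (pM\<^sup>2 + pA\<^sup>2 + pU\<^sup>2))"
    unfolding P_def using \<open>0 \<le> C\<close> by (intro mult_left_mono sum_square_le_three_sum_squares)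
  also have "\<dots> = 3 * C * (norm (pos_excess X Y))\<^sup>2"
    by (simp add: norm_state_sq pos_excess_def pM_def pA_def pU_def X Y)
  finally show ?thesis by (simp add: C_def)
qed

lemma full_le_aux_solution:
  assumes x: "is_solution F x" and y: "is_solution G y" and "x 0 = y 0" and t: "0 \<le> t"
  shows "le3 (x t) (y t)"
proof -
  have Dy: "((\<lambda>s. fst (y s)) has_real_derivative fst (G (y s))) (at s within {0..})" if "0 \<le> s" for s
    using y that by (auto simp: is_solution_def intro: has_vector_derivative_components)
  have "\<exists>smax\<in>{0..t}. \<forall>s\<in>{0..t}. fst (y s) \<le> fst (y smax)"
    by (rule continuous_attains_sup[OF compact_Icc])
      (use t continuous_on_if_has_derivative_within_Ici[OF Dy order_refl] in auto)
  then obtain R where R: "\<And>s. s \<in> {0..t} \<Longrightarrow> fst (y s) \<le> R" by blast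
  let ?C = "\<rho> + \<eta> + \<nu> * \<gamma> + (\<alpha> + \<nu> * \<gamma>) * (R / Ap)"
  have "pos_excess (x s) (y s) \<bullet> (F (x s) - G (y s)) \<le> 3 * ?C * (norm (pos_excess (x s) (y s)))\<^sup>2"
    if "s \<in> {0..t}" for s
    using x y R[OF that] that by (intro full_aux_excess_energy) (auto simp: is_solution_def)
  then show ?thesis
    using x y assms(3) t
    by (intro le3_if_excess_energy_le[where x' = "\<lambda>s. F (x s)" and y' = "\<lambda>s. G (y s)"])
      (auto simp: is_solution_def)
qed

lemma full_norm_le_aux:
  assumes x: "is_solution F x" and y: "is_solution G y" and "x 0 = y 0" "0 \<le> t"
  shows "norm (x t) \<le> norm (y t)"
  using assms full_le_aux_solution[OF assms] by (intro norm_le_if_le3) (auto simp: is_solution_def)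

section \<open>Transfer of attraction and stability\<close>

lemma basin_aux_subset_basin_full: "basin G E0 \<subseteq> basin F E0"
proof
  fix X0 assume "X0 \<in> basin G E0"
  then obtain y where X0: "X0 \<in> R3plus" and y: "is_solution G y" "y 0 = X0" and "(y \<longlongrightarrow> 0) at_top"
    by (auto simp: basin_def in_basin_def E0_eq_zero)
  then have y_lim: "((\<lambda>t. norm (y t)) \<longlongrightarrow> 0) at_top"
    by (intro tendsto_norm_zero)
  have "(x \<longlongrightarrow> 0) at_top" if x: "is_solution F x" "x 0 = X0" for x
  proof (rule Lim_null_comparison[OF _ y_lim])
    show "\<forall>\<^sub>F t in at_top. norm (x t) \<le> norm (y t)"
      using eventually_ge_at_top[of 0] by eventually_elim (use x y in \<open>auto intro: full_norm_le_aux\<close>)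
  qed
  then show "X0 \<in> basin F E0"
    using full_solution_exists[OF X0] X0 by (auto simp: basin_def in_basin_def E0_eq_zero)
qed

lemma GAS_full_if_GAS_aux:
  assumes "GAS_on_R3plus G E0"
  shows "GAS_on_R3plus F E0"
  unfolding GAS_on_R3plus_def
proof
  have stable: "lyapunov_stable G E0" and basin: "R3plus \<subseteq> basin G E0"
    using assms by (auto simp: GAS_on_R3plus_def)
  show "R3plus \<subseteq> basin F E0"
    using basin basin_aux_subset_basin_full by blast
  show "lyapunov_stable F E0"
    unfolding lyapunov_stable_def
  proof (intro allI impI)
    fix e :: real assume "0 < e"
    then obtain d where "0 < d"
      and d: "\<And>y. is_solution G y \<Longrightarrow> dist (y 0) E0 < d \<Longrightarrow> \<forall>t\<ge>0. dist (y t) E0 < e"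
      using stable unfolding lyapunov_stable_def by blast
    have "dist (x t) E0 < e" if x: "is_solution F x" "dist (x 0) E0 < d" and t: "0 \<le> t" for x t
    proof -
      have "x 0 \<in> basin G E0"
        using basin x by (auto simp: is_solution_def)
      then obtain y where y: "is_solution G y" "y 0 = x 0"
        by (auto simp: basin_def in_basin_def)
      then have "dist (y t) E0 < e" using d x t by auto
      moreover have "norm (x t) \<le> norm (y t)"
        using full_norm_le_aux[OF x(1) y(1)] y t by simp
      ultimately show ?thesis by (simp add: E0_eq_zero)
    qed
    with \<open>0 < d\<close> show "\<exists>d>0. \<forall>x. is_solution F x \<and> dist (x 0) E0 < d \<longrightarrow> (\<forall>t\<ge>0. dist (x t) E0 < e)"
      by blast
  qed
qed

end

lemma lt3_doubleton_least_eq: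
  assumes "lt3 E1 E2" "lt3 E1' E2'" "{E1, E2} = {E1', E2'}"
  shows "E1 = E1'"
  using assms by (auto simp: doubleton_eq_iff lt3_def)

theorem theorem2:
  fixes r \<rho> \<sigma> \<mu> \<delta> \<nu> \<eta> \<gamma> \<alpha> Ap Apcrit :: real
  assumes "0 < r" "r < 1" "0 < \<rho>" "0 < \<sigma>" "0 < \<mu>" "0 < \<delta>" "0 < \<nu>" "0 < \<eta>" "1 \<le> \<gamma>"
    and "0 \<le> \<alpha>" "\<alpha> \<le> 1"
    and "N_M r \<rho> \<mu> \<delta> \<nu> \<eta> \<gamma> > 1"
    and "0 < Ap"
    and "is_aux_threshold r \<rho> \<sigma> \<mu> \<delta> \<nu> \<eta> \<gamma> \<alpha> Apcrit"
  shows "(Ap < Apcrit \<longrightarrow>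
            (\<forall>E1 E2. lt3 E1 E2 \<and>
               positive_equilibria (aux_field r \<rho> \<sigma> \<mu> \<delta> \<nu> \<eta> \<gamma> \<alpha> Ap) = {E1, E2} \<longrightarrow>
               lower_box E1 \<subseteq> basin (full_field r \<rho> \<sigma> \<mu> \<delta> \<nu> \<eta> \<gamma> \<alpha> Ap) E0))
       \<and> (Apcrit < Ap \<longrightarrow> GAS_on_R3plus (full_field r \<rho> \<sigma> \<mu> \<delta> \<nu> \<eta> \<gamma> \<alpha> Ap) E0)"
proof -
  \<comment> \<open>\<open>\<alpha> \<le> 1\<close> and \<open>N_M > 1\<close> only enter through the threshold characterisation, which is assumed.\<close>
  interpret male_scarcity r \<rho> \<sigma> \<mu> \<delta> \<nu> \<eta> \<gamma> \<alpha> Ap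
    using assms by unfold_locales auto
  note threshold = assms(14)[unfolded is_aux_threshold_def]
  show ?thesis
  proof (intro conjI impI allI)
    fix E1 E2 assume "Ap < Apcrit" and E: "lt3 E1 E2 \<and> positive_equilibria G = {E1, E2}"
    then obtain E1' E2' where "lt3 E1' E2'" "positive_equilibria G = {E1', E2'}"
      and "lower_box E1' \<subseteq> basin G E0"
      using threshold \<open>0 < Ap\<close> by blast
    then show "lower_box E1 \<subseteq> basin F E0"
      using E lt3_doubleton_least_eq[of E1 E2 E1' E2'] basin_aux_subset_basin_full by auto
  next
    assume "Apcrit < Ap"
    then show "GAS_on_R3plus F E0"
      using threshold GAS_full_if_GAS_aux by blast
  qed
qed

end
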